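(* Let $R$ be an integral domain satisfying the irreducible intersection property, and let $p,q$ be prime ideals of $R$. Regarding $R_p$ and $R_q$ as subrings of $\mathrm{Frac}(R)$, the join $[R_p,R_q]$ is a local ring.
   Context: All rings are commutative with $1$. A ring $R$ satisfies the irreducible intersection property if for any prime ideals $p_1,p_2\subset R$, either $p_1+p_2=R$ or $p_1+p_2$ is a prime ideal. For subrings $A,B$ of a ring $K$, the join $[A,B]$ is the smallest subring of $K$ containing both $A$ and $B$. *)

theory Defs
  imports "HOL-Computational_Algebra.Fraction_Field"
begin

definition is_ideal :: "'a::comm_ring_1 set \<Rightarrow> bool" where
  "is_ideal I \<longleftrightarrow> 0 \<in> I \<and> (\<forall>x\<in>I. \<forall>y\<in>I. x + y \<in> I) \<and> (\<forall>r. \<forall>x\<in>I. r * x \<in> I)"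

definition prime_ideal :: "'a::comm_ring_1 set \<Rightarrow> bool" where
  "prime_ideal P \<longleftrightarrow> is_ideal P \<and> P \<noteq> UNIV \<and> (\<forall>a b. a * b \<in> P \<longrightarrow> a \<in> P \<or> b \<in> P)"

definition ideal_sum :: "'a::comm_ring_1 set \<Rightarrow> 'a set \<Rightarrow> 'a set" where
  "ideal_sum I J = {x + y | x y. x \<in> I \<and> y \<in> J}"

definition irreducible_intersection_property :: "'a::comm_ring_1 itself \<Rightarrow> bool" where
  "irreducible_intersection_property _ \<longleftrightarrow>
     (\<forall>p1 p2 :: 'a set. prime_ideal p1 \<and> prime_ideal p2 \<longrightarrow>
        ideal_sum p1 p2 = UNIV \<or> prime_ideal (ideal_sum p1 p2))"

definition is_subring :: "'b::comm_ring_1 set \<Rightarrow> bool" where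
  "is_subring S \<longleftrightarrow> 0 \<in> S \<and> 1 \<in> S \<and> (\<forall>x\<in>S. \<forall>y\<in>S. x + y \<in> S \<and> x - y \<in> S \<and> x * y \<in> S)"

definition subring_join :: "'b::comm_ring_1 set \<Rightarrow> 'b set \<Rightarrow> 'b set" where
  "subring_join A B = \<Inter>{S. is_subring S \<and> A \<subseteq> S \<and> B \<subseteq> S}"

definition ideal_of :: "'b::comm_ring_1 set \<Rightarrow> 'b set \<Rightarrow> bool" where
  "ideal_of S I \<longleftrightarrow> I \<subseteq> S \<and> 0 \<in> I \<and> (\<forall>x\<in>I. \<forall>y\<in>I. x + y \<in> I) \<and> (\<forall>r\<in>S. \<forall>x\<in>I. r * x \<in> I)"

definition maximal_ideal_of :: "'b::comm_ring_1 set \<Rightarrow> 'b set \<Rightarrow> bool" where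
  "maximal_ideal_of S M \<longleftrightarrow> ideal_of S M \<and> M \<noteq> S \<and>
     (\<forall>J. ideal_of S J \<and> M \<subseteq> J \<longrightarrow> J = M \<or> J = S)"

definition local_ring :: "'b::comm_ring_1 set \<Rightarrow> bool" where
  "local_ring S \<longleftrightarrow> is_subring S \<and> (\<exists>!M. maximal_ideal_of S M)"

definition localization :: "'a::idom set \<Rightarrow> 'a fract set" where
  "localization p = {Fract a s | a s. s \<notin> p}"

end

theory Submission
  imports Defs
begin

(*
  Put S = {s*t | s \<notin> p, t \<notin> q}, a multiplicatively closed set.  The join
  [R_p, R_q] is the localization S\<inverse>R = {a/(st)}, and a/(st) is a unit of it
  iff some multiple of a lies in S.  By the classical Zorn argument the
  numerators with no multiple in S are exactly the elements of prime ideals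
  contained in p \<inter> q.  If P1, P2 are two such primes, then P1 + P2 \<subseteq> p is
  proper, hence prime by the irreducible intersection property, and still lies
  in p \<inter> q; so these numerators are closed under addition.  Consequently the
  non-units of S\<inverse>R are closed under addition, which makes it a local ring.
*)

lemma prime_ideal_one_notin: "prime_ideal P \<Longrightarrow> (1::'a::comm_ring_1) \<notin> P"
  unfolding prime_ideal_def is_ideal_def by (metis UNIV_eq_I mult.right_neutral)

lemma prime_ideal_mult_notin:
  "prime_ideal P \<Longrightarrow> s \<notin> P \<Longrightarrow> t \<notin> P \<Longrightarrow> s * t \<notin> P"
  unfolding prime_ideal_def by blast

lemma prime_ideal_notin_nonzero: "prime_ideal P \<Longrightarrow> s \<notin> P \<Longrightarrow> (s::'a::idom) \<noteq> 0"
  unfolding prime_ideal_def is_ideal_def by blast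

lemma is_ideal_add: "is_ideal I \<Longrightarrow> x \<in> I \<Longrightarrow> y \<in> I \<Longrightarrow> x + y \<in> I"
  unfolding is_ideal_def by blast

lemma is_ideal_mult: "is_ideal I \<Longrightarrow> x \<in> I \<Longrightarrow> r * x \<in> I"
  unfolding is_ideal_def by blast

lemma ideal_sum_least: "is_ideal J \<Longrightarrow> I1 \<subseteq> J \<Longrightarrow> I2 \<subseteq> J \<Longrightarrow> ideal_sum I1 I2 \<subseteq> J"
  unfolding ideal_sum_def using is_ideal_add by blast

definition ideal_insert :: "'a::comm_ring_1 set \<Rightarrow> 'a \<Rightarrow> 'a set" where
  "ideal_insert M x = {m + r * x | m r. m \<in> M}"

lemma ideal_insert_is_ideal:
  assumes "is_ideal M"
  shows "is_ideal (ideal_insert M x)"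
  unfolding is_ideal_def
proof (intro conjI ballI allI)
  have "0 = 0 + 0 * x" "0 \<in> M" using assms unfolding is_ideal_def by simp_all
  then show "0 \<in> ideal_insert M x" unfolding ideal_insert_def by blast
next
  fix u v assume "u \<in> ideal_insert M x" "v \<in> ideal_insert M x"
  then obtain m1 r1 m2 r2 where uv: "u = m1 + r1 * x" "v = m2 + r2 * x" "m1 \<in> M" "m2 \<in> M"
    unfolding ideal_insert_def by blast
  have "u + v = (m1 + m2) + (r1 + r2) * x" using uv by (simp add: algebra_simps)
  moreover have "m1 + m2 \<in> M" using uv assms is_ideal_add by blast
  ultimately show "u + v \<in> ideal_insert M x" unfolding ideal_insert_def by blast
next
  fix r u assume "u \<in> ideal_insert M x"
  then obtain m1 r1 where u: "u = m1 + r1 * x" "m1 \<in> M" unfolding ideal_insert_def by blast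
  have "r * u = r * m1 + (r * r1) * x" using u by (simp add: algebra_simps)
  moreover have "r * m1 \<in> M" using u assms is_ideal_mult by blast
  ultimately show "r * u \<in> ideal_insert M x" unfolding ideal_insert_def by blast
qed

lemma ideal_insert_superset: "M \<subseteq> ideal_insert M x"
proof
  fix m assume "m \<in> M"
  moreover have "m = m + 0 * x" by simp
  ultimately show "m \<in> ideal_insert M x" unfolding ideal_insert_def by blast
qed

lemma ideal_insert_elem: "is_ideal M \<Longrightarrow> x \<in> ideal_insert M x"
proof -
  assume "is_ideal M"
  then have "0 \<in> M" unfolding is_ideal_def by blast
  moreover have "x = 0 + 1 * x" by simp
  ultimately show "x \<in> ideal_insert M x" unfolding ideal_insert_def by blast
qed

lemma zero_ideal: "is_ideal {0::'a::comm_ring_1}"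
  unfolding is_ideal_def by simp

lemma chain_Union_is_ideal:
  assumes "C \<noteq> {}" "\<forall>I\<in>C. is_ideal I" "subset.chain UNIV C"
  shows "is_ideal (\<Union>C)"
  unfolding is_ideal_def
proof (intro conjI ballI allI)
  show "0 \<in> \<Union>C" using assms(1,2) unfolding is_ideal_def by blast
next
  fix x y assume "x \<in> \<Union>C" "y \<in> \<Union>C"
  then obtain X Y where XY: "X \<in> C" "Y \<in> C" "x \<in> X" "y \<in> Y" by blast
  have add: "x + y \<in> Z" if "Z \<in> C" "x \<in> Z" "y \<in> Z" for Z
    using that assms(2) is_ideal_add by blast
  from assms(3) XY(1,2) have "X \<subseteq> Y \<or> Y \<subseteq> X" by (auto simp: subset_chain_def)
  then show "x + y \<in> \<Union>C"
    using add XY by blast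
next
  fix r x assume "x \<in> \<Union>C"
  then obtain X where "X \<in> C" "x \<in> X" by blast
  then have "r * x \<in> X" using assms(2) is_ideal_mult by blast
  then show "r * x \<in> \<Union>C" using \<open>X \<in> C\<close> by blast
qed

lemma prime_ideal_avoiding:
  fixes S :: "'a::comm_ring_1 set"
  assumes one: "1 \<in> S" and mult: "\<And>x y. x \<in> S \<Longrightarrow> y \<in> S \<Longrightarrow> x * y \<in> S"
    and a: "\<And>c. a * c \<notin> S"
  shows "\<exists>P. prime_ideal P \<and> P \<inter> S = {} \<and> a \<in> P"
proof -
  define F where "F = {J. is_ideal J \<and> a \<in> J \<and> J \<inter> S = {}}"
  have "ideal_insert {0} a \<inter> S = {}"
    using a unfolding ideal_insert_def by (auto simp: mult.commute)
  then have principal: "ideal_insert {0} a \<in> F"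
    using ideal_insert_is_ideal[OF zero_ideal] ideal_insert_elem[OF zero_ideal] unfolding F_def by blast
  have "\<Union>C \<in> F" if C: "C \<noteq> {}" "subset.chain F C" for C
  proof -
    have sub: "C \<subseteq> F" and "subset.chain UNIV C"
      using C(2) unfolding subset_chain_def by auto
    moreover have "\<forall>I\<in>C. is_ideal I" using sub unfolding F_def by blast
    ultimately have "is_ideal (\<Union>C)" using chain_Union_is_ideal[OF C(1)] by blast
    moreover have "a \<in> \<Union>C" "\<Union>C \<inter> S = {}" using C(1) sub unfolding F_def by blast+
    ultimately show ?thesis unfolding F_def by blast
  qed
  then obtain M where M: "M \<in> F" and M_max: "\<And>X. X \<in> F \<Longrightarrow> M \<subseteq> X \<Longrightarrow> X = M"
    using subset_Zorn_nonempty[of F] principal by blast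
  have M_ideal: "is_ideal M" and aM: "a \<in> M" and M_disj: "M \<inter> S = {}"
    using M unfolding F_def by auto
  have meets_S: "\<exists>m r. m \<in> M \<and> m + r * x \<in> S" if x: "x \<notin> M" for x
  proof (rule ccontr)
    assume "\<not> ?thesis"
    then have "ideal_insert M x \<inter> S = {}" unfolding ideal_insert_def by blast
    moreover have "M \<subseteq> ideal_insert M x" by (rule ideal_insert_superset)
    ultimately have "ideal_insert M x \<in> F"
      using ideal_insert_is_ideal[OF M_ideal] aM unfolding F_def by blast
    then have "ideal_insert M x = M" using M_max \<open>M \<subseteq> ideal_insert M x\<close> by blast
    then show False using ideal_insert_elem[OF M_ideal, of x] x by simp
  qed
  have "x \<in> M \<or> y \<in> M" if xy: "x * y \<in> M" for x y
  proof (rule ccontr)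
    assume "\<not> ?thesis"
    then obtain m1 r1 m2 r2 where m: "m1 \<in> M" "m1 + r1 * x \<in> S" "m2 \<in> M" "m2 + r2 * y \<in> S"
      using meets_S by meson
    have "(m1 + r1 * x) * (m2 + r2 * y) = (m2 + r2 * y) * m1 + (r1 * x) * m2 + (r1 * r2) * (x * y)"
      by (simp add: algebra_simps)
    also have "\<dots> \<in> M"
      by (intro is_ideal_add is_ideal_mult M_ideal m(1) m(3) xy)
    finally show False using mult[OF m(2,4)] M_disj by blast
  qed
  moreover have "M \<noteq> UNIV" using M_disj one by blast
  ultimately show ?thesis using M_ideal aM M_disj unfolding prime_ideal_def by blast
qed

definition joint_denominators :: "'a::comm_ring_1 set \<Rightarrow> 'a set \<Rightarrow> 'a set" where
  "joint_denominators p q = {s * t | s t. s \<notin> p \<and> t \<notin> q}"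

lemma joint_denominators_mult:
  assumes p: "prime_ideal p" and q: "prime_ideal q"
    and "x \<in> joint_denominators p q" "y \<in> joint_denominators p q"
  shows "x * y \<in> joint_denominators p q"
proof -
  obtain s t s' t' where x: "x = s * t" "s \<notin> p" "t \<notin> q" and y: "y = s' * t'" "s' \<notin> p" "t' \<notin> q"
    using assms(3,4) unfolding joint_denominators_def by blast
  have "x * y = (s * s') * (t * t')" using x y by (simp add: ac_simps)
  moreover have "s * s' \<notin> p" "t * t' \<notin> q"
    using prime_ideal_mult_notin p q x y by auto
  ultimately show ?thesis unfolding joint_denominators_def by blast
qed

text \<open>An element outside p (or outside q) lies in S after multiplying by 1;
  hence a set disjoint from S is contained in p \<inter> q.\<close>

lemma disjoint_joint_denominators_sub:
  assumes p: "prime_ideal p" and q: "prime_ideal q"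
    and disj: "P \<inter> joint_denominators p q = {}"
  shows "P \<subseteq> p" "P \<subseteq> q"
proof -
  have "z * 1 \<in> joint_denominators p q" if "z \<notin> p" for z
    using that prime_ideal_one_notin[OF q] unfolding joint_denominators_def by blast
  then show "P \<subseteq> p" using disj by auto
  have "1 * z \<in> joint_denominators p q" if "z \<notin> q" for z
    using that prime_ideal_one_notin[OF p] unfolding joint_denominators_def by blast
  then show "P \<subseteq> q" using disj by auto
qed

text \<open>Numerators having no multiple in S; they give the non-units of the join.\<close>

definition nonunit_numerators :: "'a::comm_ring_1 set \<Rightarrow> 'a set \<Rightarrow> 'a set" where
  "nonunit_numerators p q = {a. \<forall>c. a * c \<notin> joint_denominators p q}"

lemma nonunit_numerators_mult: "a \<in> nonunit_numerators p q \<Longrightarrow> a * b \<in> nonunit_numerators p q"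
  unfolding nonunit_numerators_def by (simp add: mult.assoc)

lemma nonunit_numerators_iff:
  assumes p: "prime_ideal p" and q: "prime_ideal q"
  shows "a \<in> nonunit_numerators p q \<longleftrightarrow>
           (\<exists>P. prime_ideal P \<and> P \<subseteq> p \<and> P \<subseteq> q \<and> a \<in> P)"
proof
  assume "a \<in> nonunit_numerators p q"
  then have "\<And>c. a * c \<notin> joint_denominators p q" unfolding nonunit_numerators_def by blast
  moreover have "(1::'a) * 1 \<in> joint_denominators p q"
    using prime_ideal_one_notin[OF p] prime_ideal_one_notin[OF q]
    unfolding joint_denominators_def by blast
  ultimately obtain P where "prime_ideal P" "P \<inter> joint_denominators p q = {}" "a \<in> P"
    using prime_ideal_avoiding[of "joint_denominators p q" a] joint_denominators_mult[OF p q]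
    by auto
  then show "\<exists>P. prime_ideal P \<and> P \<subseteq> p \<and> P \<subseteq> q \<and> a \<in> P"
    using disjoint_joint_denominators_sub[OF p q] by blast
next
  assume "\<exists>P. prime_ideal P \<and> P \<subseteq> p \<and> P \<subseteq> q \<and> a \<in> P"
  then obtain P where P: "prime_ideal P" "P \<subseteq> p" "P \<subseteq> q" "a \<in> P" by blast
  have "a * c \<noteq> s * t" if "s \<notin> p" "t \<notin> q" for c s t
  proof
    assume "a * c = s * t"
    moreover have "a * c \<in> P"
      using P is_ideal_mult[of P a c] unfolding prime_ideal_def by (simp add: mult.commute)
    moreover have "s * t \<notin> P" using P that prime_ideal_mult_notin[OF P(1)] by blast
    ultimately show False by simp
  qed
  then show "a \<in> nonunit_numerators p q"
    unfolding nonunit_numerators_def joint_denominators_def by blast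
qed

text \<open>The key use of the irreducible intersection property: the sum of two primes
  inside p \<inter> q is again such a prime, so the non-unit numerators are additive.\<close>

lemma nonunit_numerators_add:
  assumes iip: "irreducible_intersection_property TYPE('a::comm_ring_1)"
    and p: "prime_ideal (p::'a set)" and q: "prime_ideal q"
    and a: "a \<in> nonunit_numerators p q" and b: "b \<in> nonunit_numerators p q"
  shows "a + b \<in> nonunit_numerators p q"
proof -
  obtain P1 P2 where P1: "prime_ideal P1" "P1 \<subseteq> p" "P1 \<subseteq> q" "a \<in> P1"
    and P2: "prime_ideal P2" "P2 \<subseteq> p" "P2 \<subseteq> q" "b \<in> P2"
    using a b nonunit_numerators_iff[OF p q] by meson
  have sum_sub: "ideal_sum P1 P2 \<subseteq> p" "ideal_sum P1 P2 \<subseteq> q"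
    using P1 P2 p q ideal_sum_least unfolding prime_ideal_def by meson+
  then have "ideal_sum P1 P2 \<noteq> UNIV" using prime_ideal_one_notin[OF p] by blast
  then have "prime_ideal (ideal_sum P1 P2)"
    using iip P1(1) P2(1) unfolding irreducible_intersection_property_def by blast
  moreover have "a + b \<in> ideal_sum P1 P2" using P1 P2 unfolding ideal_sum_def by blast
  ultimately show ?thesis using sum_sub nonunit_numerators_iff[OF p q] by blast
qed

definition joint_localization :: "'a::idom set \<Rightarrow> 'a set \<Rightarrow> 'a fract set" where
  "joint_localization p q = {Fract a (s * t) | a s t. s \<notin> p \<and> t \<notin> q}"

lemma joint_localization_subring:
  assumes p: "prime_ideal (p::'a::idom set)" and q: "prime_ideal q"
  shows "is_subring (joint_localization p q)"
  unfolding is_subring_def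
proof (intro conjI ballI)
  have 1: "(1::'a) \<notin> p" "(1::'a) \<notin> q" using prime_ideal_one_notin p q by auto
  show "0 \<in> joint_localization p q" "1 \<in> joint_localization p q"
    unfolding joint_localization_def Zero_fract_def One_fract_def using 1
    by (force intro: exI[of _ 1])+
next
  fix x y assume "x \<in> joint_localization p q" "y \<in> joint_localization p q"
  then obtain a s t b s' t' where x: "x = Fract a (s * t)" "s \<notin> p" "t \<notin> q"
    and y: "y = Fract b (s' * t')" "s' \<notin> p" "t' \<notin> q"
    unfolding joint_localization_def by blast
  have nz: "s * t \<noteq> 0" "s' * t' \<noteq> 0" using x y prime_ideal_notin_nonzero p q by auto
  have ss: "s * s' \<notin> p" "t * t' \<notin> q" using prime_ideal_mult_notin p q x y by auto
  have e: "(s * t) * (s' * t') = (s * s') * (t * t')" by (simp add: ac_simps)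
  show "x + y \<in> joint_localization p q" "x - y \<in> joint_localization p q"
    "x * y \<in> joint_localization p q"
    unfolding joint_localization_def x y add_fract[OF nz] diff_fract[OF nz] mult_fract e
    using ss by blast+
qed

text \<open>The join [R_p, R_q] is the localization S\<inverse>R: it contains both localizations,
  and conversely a/(st) = (a/s)(1/t) lies in every subring containing them.\<close>

lemma subring_join_localizations:
  assumes p: "prime_ideal (p::'a::idom set)" and q: "prime_ideal q"
  shows "subring_join (localization p) (localization q) = joint_localization p q"
proof
  have 1: "(1::'a) \<notin> p" "(1::'a) \<notin> q" using prime_ideal_one_notin p q by auto
  have "localization p \<subseteq> joint_localization p q" "localization q \<subseteq> joint_localization p q"
    unfolding localization_def joint_localization_def using 1
    by (force intro: exI[of _ 1])+
  then show "subring_join (localization p) (localization q) \<subseteq> joint_localization p q"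
    unfolding subring_join_def using joint_localization_subring[OF p q] by blast
next
  have "joint_localization p q \<subseteq> S"
    if S: "is_subring S" "localization p \<subseteq> S" "localization q \<subseteq> S" for S
  proof
    fix x assume "x \<in> joint_localization p q"
    then obtain a s t where x: "x = Fract a (s * t)" "s \<notin> p" "t \<notin> q"
      unfolding joint_localization_def by blast
    have "Fract a s \<in> S" "Fract 1 t \<in> S" using S x unfolding localization_def by blast+
    then have "Fract a s * Fract 1 t \<in> S" using S unfolding is_subring_def by blast
    then show "x \<in> S" using x by simp
  qed
  then show "joint_localization p q \<subseteq> subring_join (localization p) (localization q)"
    unfolding subring_join_def by blast
qed

definition nonunits :: "'b::comm_ring_1 set \<Rightarrow> 'b set" where
  "nonunits S = {x \<in> S. \<not> (\<exists>y\<in>S. x * y = 1)}"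

lemma joint_localization_unit_iff:
  assumes p: "prime_ideal (p::'a::idom set)" and q: "prime_ideal q"
    and x: "x = Fract a (s * t)" "s \<notin> p" "t \<notin> q"
  shows "x \<in> nonunits (joint_localization p q) \<longleftrightarrow> a \<in> nonunit_numerators p q"
proof -
  have xT: "x \<in> joint_localization p q" using x unfolding joint_localization_def by blast
  have "(\<exists>y\<in>joint_localization p q. x * y = 1) \<longleftrightarrow> a \<notin> nonunit_numerators p q"
  proof
    assume "\<exists>y\<in>joint_localization p q. x * y = 1"
    then obtain b s' t' where y: "x * Fract b (s' * t') = 1" "s' \<notin> p" "t' \<notin> q"
      unfolding joint_localization_def by blast
    have nz: "s * t * (s' * t') \<noteq> 0" using x y prime_ideal_notin_nonzero p q by auto
    have "Fract (a * b) (s * t * (s' * t')) = Fract 1 1" using y x by (simp add: One_fract_def)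
    then have "a * b = (s * s') * (t * t')" using eq_fract(1)[OF nz one_neq_zero] by (simp add: ac_simps)
    moreover have "s * s' \<notin> p" "t * t' \<notin> q" using prime_ideal_mult_notin p q x y by auto
    ultimately show "a \<notin> nonunit_numerators p q"
      unfolding nonunit_numerators_def joint_denominators_def by blast
  next
    assume "a \<notin> nonunit_numerators p q"
    then obtain c s' t' where c: "a * c = s' * t'" "s' \<notin> p" "t' \<notin> q"
      unfolding nonunit_numerators_def joint_denominators_def by blast
    have nz: "s * t * (s' * t') \<noteq> 0" using x c prime_ideal_notin_nonzero p q by auto
    have "a * (c * s * t) = s * t * (s' * t')" using c(1) by (simp add: ac_simps)
    then have "x * Fract (c * s * t) (s' * t') = 1"
      using x eq_fract(1)[OF nz one_neq_zero] by (simp add: One_fract_def)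
    moreover have "Fract (c * s * t) (s' * t') \<in> joint_localization p q"
      unfolding joint_localization_def using c by blast
    ultimately show "\<exists>y\<in>joint_localization p q. x * y = 1" by blast
  qed
  then show ?thesis using xT unfolding nonunits_def by blast
qed

lemma joint_localization_nonunits_add:
  assumes iip: "irreducible_intersection_property TYPE('a::idom)"
    and p: "prime_ideal (p::'a set)" and q: "prime_ideal q"
    and x: "x \<in> nonunits (joint_localization p q)" and y: "y \<in> nonunits (joint_localization p q)"
  shows "x + y \<in> nonunits (joint_localization p q)"
proof -
  obtain a s t b s' t' where xa: "x = Fract a (s * t)" "s \<notin> p" "t \<notin> q"
    and yb: "y = Fract b (s' * t')" "s' \<notin> p" "t' \<notin> q"
    using x y unfolding nonunits_def joint_localization_def by blast
  have a: "a \<in> nonunit_numerators p q" using joint_localization_unit_iff[OF p q xa] x by blast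
  have b: "b \<in> nonunit_numerators p q" using joint_localization_unit_iff[OF p q yb] y by blast
  have nz: "s * t \<noteq> 0" "s' * t' \<noteq> 0" using xa yb prime_ideal_notin_nonzero p q by auto
  have sum: "x + y = Fract (a * (s' * t') + b * (s * t)) ((s * s') * (t * t'))"
    unfolding xa yb add_fract[OF nz] by (simp add: ac_simps)
  have "a * (s' * t') + b * (s * t) \<in> nonunit_numerators p q"
    using nonunit_numerators_add[OF iip p q] nonunit_numerators_mult a b by blast
  moreover have "s * s' \<notin> p" "t * t' \<notin> q" using prime_ideal_mult_notin p q xa yb by auto
  ultimately show ?thesis using joint_localization_unit_iff[OF p q sum] by blast
qed

text \<open>A ring whose non-units are closed under addition is local: the non-units then form
  an ideal, and every proper ideal consists of non-units.\<close>

lemma local_ring_if_nonunits_add: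
  assumes S: "is_subring (S::'b::comm_ring_1 set)"
    and add: "\<And>x y. x \<in> nonunits S \<Longrightarrow> y \<in> nonunits S \<Longrightarrow> x + y \<in> nonunits S"
  shows "local_ring S"
proof -
  define N where "N = nonunits S"
  have S_mult: "x * y \<in> S" if "x \<in> S" "y \<in> S" for x y
    using S that unfolding is_subring_def by blast
  have mult: "r * x \<in> N" if r: "r \<in> S" and x: "x \<in> N" for r x
  proof -
    have "x * (r * y) \<noteq> 1" if "y \<in> S" for y
      using x r that S_mult unfolding N_def nonunits_def by blast
    then have "\<not> (\<exists>y\<in>S. (r * x) * y = 1)" by (simp add: ac_simps)
    moreover have "r * x \<in> S" using r x S_mult unfolding N_def nonunits_def by blast
    ultimately show ?thesis unfolding N_def nonunits_def by blast
  qed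
  have "0 \<in> N" using S unfolding N_def nonunits_def is_subring_def by simp
  then have N_ideal: "ideal_of S N"
    using add mult unfolding ideal_of_def N_def nonunits_def by blast
  have N_proper: "N \<noteq> S"
    using S unfolding N_def nonunits_def is_subring_def by force
  have proper_sub: "J \<subseteq> N" if J: "ideal_of S J" "J \<noteq> S" for J
  proof
    fix x assume xJ: "x \<in> J"
    show "x \<in> N"
    proof (rule ccontr)
      assume "x \<notin> N"
      then obtain y where y: "y \<in> S" "x * y = 1"
        using J xJ unfolding N_def nonunits_def ideal_of_def by blast
      have "r \<in> J" if r: "r \<in> S" for r
      proof -
        have "(r * y) * x \<in> J" using J xJ r y S_mult unfolding ideal_of_def by blast
        then show ?thesis using y by (simp add: ac_simps)
      qed
      then show False using J unfolding ideal_of_def by blast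
    qed
  qed
  have "maximal_ideal_of S N"
    unfolding maximal_ideal_of_def using N_ideal N_proper proper_sub by blast
  moreover have "M = N" if "maximal_ideal_of S M" for M
    using that proper_sub N_ideal N_proper unfolding maximal_ideal_of_def by blast
  ultimately show ?thesis unfolding local_ring_def using S by blast
qed

theorem mainTheorem7:
  fixes p q :: "'a::idom set"
  assumes "irreducible_intersection_property TYPE('a)"
    and "prime_ideal p" and "prime_ideal q"
  shows "local_ring (subring_join (localization p) (localization q))"
proof -
  have "local_ring (joint_localization p q)"
    using local_ring_if_nonunits_add joint_localization_subring[OF assms(2,3)]
      joint_localization_nonunits_add[OF assms] by blast
  then show ?thesis using subring_join_localizations[OF assms(2,3)] by simp
qed

end
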